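(* Every reduced $2$-Segal set is equivalent to the simplicial set $\mathrm{ob}\,S^{\square}_\bullet\mathbb{C}$ for some squares category $\mathbb{C}$.
   Context: A squares category is a flat double category (squares uniquely determined by their boundary; we say a boundary "is a square") with a distinguished object $O$ initial in the horizontal category (morphisms $\rightarrowtail$) and terminal in the vertical category (morphisms $\twoheadrightarrow$). $\mathrm{ob}\,S^{\square}_n\mathbb{C}$ is the set of families $(A_{jk})_{0\le j\le k\le n}$ of objects with $A_{jj}=O$, horizontal morphisms $A_{jk}\rightarrowtail A_{j,k+1}$ and vertical morphisms $A_{jk}\twoheadrightarrow A_{j+1,k}$ ($j<k$) such that each unit cell with corners $A_{jk},A_{j,k+1},A_{j+1,k},A_{j+1,k+1}$ ($j<k<n$) is a square; for $\theta:[m]\to[n]$ the simplicial operator sends $(A_{jk})$ to $(A_{\theta(j)\theta(k)})$ with the composite morphisms. A $2$-Segal set is a simplicial set $X$ such that for every $n\ge3$ and $0\le i<j\le n$ the square with vertices $X_n$, $X_{\{i,\dots,j\}}$, $X_{\{0,\dots,i,j,\dots,n\}}$, $X_{\{i,j\}}$ (maps induced by the inclusions of these subsets of $[n]$) is a pullback. It is reduced if $X_0$ is a single point. *)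

theory Defs
  imports Main
begin

record ('o, 'm) cat =
  obj :: "'o set"
  arr :: "'m set"
  c_dom :: "'m \<Rightarrow> 'o"
  c_cod :: "'m \<Rightarrow> 'o"
  comp :: "'m \<Rightarrow> 'm \<Rightarrow> 'm"   (* comp C g f = g \<circ> f *)
  idm :: "'o \<Rightarrow> 'm"

definition hom :: "('o, 'm) cat \<Rightarrow> 'o \<Rightarrow> 'o \<Rightarrow> 'm set" where
  "hom C a b = {f \<in> arr C. c_dom C f = a \<and> c_cod C f = b}"

definition is_category :: "('o, 'm) cat \<Rightarrow> bool" where
  "is_category C \<longleftrightarrow>
     (\<forall>f\<in>arr C. c_dom C f \<in> obj C \<and> c_cod C f \<in> obj C) \<and>
     (\<forall>a\<in>obj C. idm C a \<in> hom C a a) \<and>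
     (\<forall>f\<in>arr C. \<forall>g\<in>arr C. c_cod C f = c_dom C g \<longrightarrow>
         comp C g f \<in> hom C (c_dom C f) (c_cod C g)) \<and>
     (\<forall>f\<in>arr C. comp C f (idm C (c_dom C f)) = f \<and> comp C (idm C (c_cod C f)) f = f) \<and>
     (\<forall>f\<in>arr C. \<forall>g\<in>arr C. \<forall>h\<in>arr C.
         c_cod C f = c_dom C g \<longrightarrow> c_cod C g = c_dom C h \<longrightarrow>
         comp C h (comp C g f) = comp C (comp C h g) f)"

text \<open>A flat double category: a horizontal and a vertical category on the same
  objects together with the predicate "the boundary is a square".
  sq f g u v: top f : A -> B, bottom g : C -> D (horizontal),
  left u : A -> C, right v : B -> D (vertical).\<close>

record ('o, 'h, 'v) dbl =
  hcat :: "('o, 'h) cat"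
  vcat :: "('o, 'v) cat"
  sq :: "'h \<Rightarrow> 'h \<Rightarrow> 'v \<Rightarrow> 'v \<Rightarrow> bool"

definition flat_double_category :: "('o, 'h, 'v) dbl \<Rightarrow> bool" where
  "flat_double_category D \<longleftrightarrow>
     (let H = hcat D; V = vcat D in
       is_category H \<and> is_category V \<and> obj H = obj V \<and>
       (\<forall>f g u v. sq D f g u v \<longrightarrow>
          f \<in> arr H \<and> g \<in> arr H \<and> u \<in> arr V \<and> v \<in> arr V \<and>
          c_dom V u = c_dom H f \<and> c_cod V u = c_dom H g \<and>
          c_dom V v = c_cod H f \<and> c_cod V v = c_cod H g) \<and>
       (\<forall>u\<in>arr V. sq D (idm H (c_dom V u)) (idm H (c_cod V u)) u u) \<and>
       (\<forall>f\<in>arr H. sq D f f (idm V (c_dom H f)) (idm V (c_cod H f))) \<and>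
       (\<forall>f g u v f' g' w. sq D f g u v \<longrightarrow> sq D f' g' v w \<longrightarrow>
          sq D (comp H f' f) (comp H g' g) u w) \<and>
       (\<forall>f g u v h u' v'. sq D f g u v \<longrightarrow> sq D g h u' v' \<longrightarrow>
          sq D f h (comp V u' u) (comp V v' v)))"

definition squares_category :: "('o, 'h, 'v) dbl \<Rightarrow> 'o \<Rightarrow> bool" where
  "squares_category D Z \<longleftrightarrow>
     flat_double_category D \<and> Z \<in> obj (hcat D) \<and>
     (\<forall>A\<in>obj (hcat D). \<exists>!f. f \<in> hom (hcat D) Z A) \<and>
     (\<forall>A\<in>obj (vcat D). \<exists>!u. u \<in> hom (vcat D) A Z)"

text \<open>lev X n = X_n; smap X theta m n : X_n -> X_m for theta : [m] -> [n].\<close>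

record 'x sset =
  lev :: "nat \<Rightarrow> 'x set"
  smap :: "(nat \<Rightarrow> nat) \<Rightarrow> nat \<Rightarrow> nat \<Rightarrow> 'x \<Rightarrow> 'x"

definition simp_op :: "(nat \<Rightarrow> nat) \<Rightarrow> nat \<Rightarrow> nat \<Rightarrow> bool" where
  "simp_op \<theta> m n \<longleftrightarrow> (\<forall>i\<le>m. \<theta> i \<le> n) \<and> (\<forall>i j. i \<le> j \<longrightarrow> j \<le> m \<longrightarrow> \<theta> i \<le> \<theta> j)"

definition is_sset :: "'x sset \<Rightarrow> bool" where
  "is_sset X \<longleftrightarrow>
     (\<forall>\<theta> m n. simp_op \<theta> m n \<longrightarrow> (\<forall>x\<in>lev X n. smap X \<theta> m n x \<in> lev X m)) \<and>
     (\<forall>\<theta> \<theta>' m n. simp_op \<theta> m n \<longrightarrow> (\<forall>i\<le>m. \<theta> i = \<theta>' i) \<longrightarrow>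
        (\<forall>x\<in>lev X n. smap X \<theta> m n x = smap X \<theta>' m n x)) \<and>
     (\<forall>n. \<forall>x\<in>lev X n. smap X id n n x = x) \<and>
     (\<forall>\<phi> \<theta> k m n. simp_op \<phi> k m \<longrightarrow> simp_op \<theta> m n \<longrightarrow>
        (\<forall>x\<in>lev X n. smap X (\<theta> \<circ> \<phi>) k n x = smap X \<phi> k m (smap X \<theta> m n x)))"

definition sset_iso :: "'x sset \<Rightarrow> 'y sset \<Rightarrow> (nat \<Rightarrow> 'x \<Rightarrow> 'y) \<Rightarrow> bool" where
  "sset_iso X Y f \<longleftrightarrow>
     (\<forall>n. bij_betw (f n) (lev X n) (lev Y n)) \<and>
     (\<forall>\<theta> m n. simp_op \<theta> m n \<longrightarrow>
        (\<forall>x\<in>lev X n. f m (smap X \<theta> m n x) = smap Y \<theta> m n (f n x)))"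

definition reduced :: "'x sset \<Rightarrow> bool" where
  "reduced X \<longleftrightarrow> (\<exists>p. lev X 0 = {p})"

text \<open>2-Segal: for n >= 3 and 0 <= i < j <= n, the square
  X_n -> X_{i..j} (= X_{j-i}), X_n -> X_{0..i,j..n} (= X_{n-(j-i)+1}),
  both to X_{i,j} (= X_1), is a pullback of sets.\<close>

definition two_segal :: "'x sset \<Rightarrow> bool" where
  "two_segal X \<longleftrightarrow>
     (\<forall>n i j. 3 \<le> n \<longrightarrow> i < j \<longrightarrow> j \<le> n \<longrightarrow>
       (\<forall>a\<in>lev X (j - i). \<forall>b\<in>lev X (n - (j - i) + 1).
          smap X (\<lambda>t. if t = 0 then 0 else j - i) 1 (j - i) a =
          smap X (\<lambda>t. if t = 0 then i else i + 1) 1 (n - (j - i) + 1) b \<longrightarrow>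
          (\<exists>!x. x \<in> lev X n \<and>
               smap X (\<lambda>t. i + t) (j - i) n x = a \<and>
               smap X (\<lambda>t. if t \<le> i then t else t + (j - i) - 1) (n - (j - i) + 1) n x = b)))"

text \<open>An n-simplex is (A, h, v): A j k the objects (0 <= j <= k <= n),
  h j k : A j k -> A j (k+1) horizontal (j <= k < n),
  v j k : A j k -> A (j+1) k vertical (j < k <= n);
  all entries outside these ranges are fixed to undefined.\<close>

fun hpath :: "('o, 'h) cat \<Rightarrow> (nat \<Rightarrow> nat \<Rightarrow> 'o) \<Rightarrow> (nat \<Rightarrow> nat \<Rightarrow> 'h) \<Rightarrow> nat \<Rightarrow> nat \<Rightarrow> nat \<Rightarrow> 'h" where
  "hpath H A h j k 0 = idm H (A j k)"
| "hpath H A h j k (Suc d) = comp H (h j (k + d)) (hpath H A h j k d)"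

fun vpath :: "('o, 'v) cat \<Rightarrow> (nat \<Rightarrow> nat \<Rightarrow> 'o) \<Rightarrow> (nat \<Rightarrow> nat \<Rightarrow> 'v) \<Rightarrow> nat \<Rightarrow> nat \<Rightarrow> nat \<Rightarrow> 'v" where
  "vpath V A v j k 0 = idm V (A j k)"
| "vpath V A v j k (Suc d) = comp V (v (j + d) k) (vpath V A v j k d)"

definition Ssq_lev :: "('o, 'h, 'v) dbl \<Rightarrow> 'o \<Rightarrow> nat \<Rightarrow>
    ((nat \<Rightarrow> nat \<Rightarrow> 'o) \<times> (nat \<Rightarrow> nat \<Rightarrow> 'h) \<times> (nat \<Rightarrow> nat \<Rightarrow> 'v)) set" where
  "Ssq_lev D Z n = {(A, h, v).
     (\<forall>j k. j \<le> k \<and> k \<le> n \<longrightarrow> A j k \<in> obj (hcat D)) \<and>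
     (\<forall>j\<le>n. A j j = Z) \<and>
     (\<forall>j k. j \<le> k \<and> k < n \<longrightarrow> h j k \<in> hom (hcat D) (A j k) (A j (Suc k))) \<and>
     (\<forall>j k. j < k \<and> k \<le> n \<longrightarrow> v j k \<in> hom (vcat D) (A j k) (A (Suc j) k)) \<and>
     (\<forall>j k. j < k \<and> k < n \<longrightarrow> sq D (h j k) (h (Suc j) k) (v j k) (v j (Suc k))) \<and>
     (\<forall>j k. \<not> (j \<le> k \<and> k \<le> n) \<longrightarrow> A j k = undefined) \<and>
     (\<forall>j k. \<not> (j \<le> k \<and> k < n) \<longrightarrow> h j k = undefined) \<and>
     (\<forall>j k. \<not> (j < k \<and> k \<le> n) \<longrightarrow> v j k = undefined)}"

definition Ssq_map :: "('o, 'h, 'v) dbl \<Rightarrow> (nat \<Rightarrow> nat) \<Rightarrow> nat \<Rightarrow> nat \<Rightarrow>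
    ((nat \<Rightarrow> nat \<Rightarrow> 'o) \<times> (nat \<Rightarrow> nat \<Rightarrow> 'h) \<times> (nat \<Rightarrow> nat \<Rightarrow> 'v)) \<Rightarrow>
    ((nat \<Rightarrow> nat \<Rightarrow> 'o) \<times> (nat \<Rightarrow> nat \<Rightarrow> 'h) \<times> (nat \<Rightarrow> nat \<Rightarrow> 'v))" where
  "Ssq_map D \<theta> m n x = (case x of (A, h, v) \<Rightarrow>
     (\<lambda>j k. if j \<le> k \<and> k \<le> m then A (\<theta> j) (\<theta> k) else undefined,
      \<lambda>j k. if j \<le> k \<and> k < m
             then hpath (hcat D) A h (\<theta> j) (\<theta> k) (\<theta> (Suc k) - \<theta> k) else undefined,
      \<lambda>j k. if j < k \<and> k \<le> m
             then vpath (vcat D) A v (\<theta> j) (\<theta> k) (\<theta> (Suc j) - \<theta> j) else undefined))"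

definition Ssq :: "('o, 'h, 'v) dbl \<Rightarrow> 'o \<Rightarrow>
    ((nat \<Rightarrow> nat \<Rightarrow> 'o) \<times> (nat \<Rightarrow> nat \<Rightarrow> 'h) \<times> (nat \<Rightarrow> nat \<Rightarrow> 'v)) sset" where
  "Ssq D Z = \<lparr> lev = Ssq_lev D Z, smap = Ssq_map D \<rparr>"

end

(*
  The squares category is read off X itself. Its objects are the 1-simplices; a horizontal
  morphism a -> b is a 2-simplex s with s_01 = a and s_02 = b, a vertical one has s_02 = a and
  s_12 = b, and a square is the boundary of a 3-simplex w, with top w_023, bottom w_123, left
  w_012 and right w_013. The 2-Segal condition in dimension 3 says that a 3-simplex exists and is
  unique for every compatible pair of faces 012, 023 (or 123, 013): this defines both
  compositions, and dimension 4 gives associativity and the pasting of squares. The degenerate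
  edge O over the unique vertex is horizontally initial and vertically terminal, because a
  triangle with an edge equal to O is degenerate.

  An n-simplex x is sent to its grid: objects x_jk, horizontal morphisms x_(j,k,k+1), vertical
  morphisms x_(j,j+1,k), so the unit cell (j,k) is the boundary of x_(j,j+1,k,k+1). Bijectivity is
  proved by induction on n with the 2-Segal decomposition of [n+1] into [0..n] and {0,n,n+1}:
  an n-simplex extends uniquely along a triangle, and uniqueness of the squares of a grid
  propagates the extension down its last column.
*)

theory Submission
  imports Defs
begin

(* restr X n [i0, ..., im] x is the face or degeneracy x_(i0...im) of the n-simplex x; lemma
   names such as eq_by_012_023 refer to these vertex lists. *)
definition restr :: "'x sset \<Rightarrow> nat \<Rightarrow> nat list \<Rightarrow> 'x \<Rightarrow> 'x" where
  "restr X n l x = smap X (\<lambda>t. l ! t) (length l - 1) n x"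

definition simp_list :: "nat list \<Rightarrow> nat \<Rightarrow> bool" where
  "simp_list l n \<longleftrightarrow> l \<noteq> [] \<and> sorted l \<and> (\<forall>i\<in>set l. i \<le> n)"

lemma simp_list_simps [simp]:
  "simp_list [] n = False"
  "simp_list [a] n = (a \<le> n)"
  "simp_list (a # b # l) n = (a \<le> b \<and> simp_list (b # l) n)"
  by (auto simp: simp_list_def)

lemma simp_op_nth: "simp_list l n \<Longrightarrow> length l = Suc m \<Longrightarrow> simp_op (\<lambda>t. l ! t) m n"
  unfolding simp_list_def simp_op_def by (auto intro: sorted_nth_mono)

lemma simp_op_comp: "simp_op \<phi> k m \<Longrightarrow> simp_op \<theta> m n \<Longrightarrow> simp_op (\<theta> \<circ> \<phi>) k n"
  unfolding simp_op_def by auto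

lemma simp_list_map: "simp_op \<theta> m n \<Longrightarrow> simp_list l m \<Longrightarrow> simp_list (map \<theta> l) n"
  unfolding simp_list_def simp_op_def by (auto simp: sorted_iff_nth_mono)

lemma simp_list_upt: "simp_list [0..<Suc n] n"
  by (auto simp del: upt_Suc simp: simp_list_def)

locale simplicial_set =
  fixes X :: "'x sset"
  assumes is_sset: "is_sset X"
begin

lemma smap_closed: "simp_op \<theta> m n \<Longrightarrow> x \<in> lev X n \<Longrightarrow> smap X \<theta> m n x \<in> lev X m"
  using is_sset unfolding is_sset_def by blast

lemma smap_cong:
  "simp_op \<theta> m n \<Longrightarrow> (\<And>i. i \<le> m \<Longrightarrow> \<theta> i = \<theta>' i) \<Longrightarrow> x \<in> lev X n \<Longrightarrow>
   smap X \<theta> m n x = smap X \<theta>' m n x"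
  using is_sset unfolding is_sset_def by blast

lemma smap_id: "x \<in> lev X n \<Longrightarrow> smap X id n n x = x"
  using is_sset unfolding is_sset_def by blast

lemma smap_comp:
  "simp_op \<phi> k m \<Longrightarrow> simp_op \<theta> m n \<Longrightarrow> x \<in> lev X n \<Longrightarrow>
   smap X (\<theta> \<circ> \<phi>) k n x = smap X \<phi> k m (smap X \<theta> m n x)"
  using is_sset unfolding is_sset_def by blast

lemma restr_closed:
  "simp_list l n \<Longrightarrow> length l = Suc m \<Longrightarrow> x \<in> lev X n \<Longrightarrow> restr X n l x \<in> lev X m"
  unfolding restr_def using smap_closed simp_op_nth by auto

lemma restr_restr [simp]:
  assumes l: "simp_list l n" "length l = Suc m" and l': "simp_list l' m" and x: "x \<in> lev X n"
  shows "restr X m l' (restr X n l x) = restr X n (map (\<lambda>i. l ! i) l') x"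
proof -
  obtain k where k: "length l' = Suc k"
    using l' by (cases l') (auto simp: simp_list_def)
  have "restr X m l' (restr X n l x) = smap X ((\<lambda>t. l ! t) \<circ> (\<lambda>t. l' ! t)) k n x"
    unfolding restr_def using l l' k x by (simp add: smap_comp[symmetric] simp_op_nth)
  also have "\<dots> = restr X n (map (\<lambda>i. l ! i) l') x"
    unfolding restr_def length_map k diff_Suc_1 using l l' k x
    by (intro smap_cong) (auto intro!: simp_op_nth simp_op_comp[of _ k m] simp: simp_list_def)
  finally show ?thesis .
qed

lemma smap_eq_restr:
  "simp_op \<theta> m n \<Longrightarrow> x \<in> lev X n \<Longrightarrow> smap X \<theta> m n x = restr X n (map \<theta> [0..<Suc m]) x"
  unfolding restr_def length_map length_upt diff_Suc_1 diff_zero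
  by (rule smap_cong) (auto simp del: upt_Suc simp: nth_append)

lemma restr_upt: "x \<in> lev X n \<Longrightarrow> restr X n [0..<Suc n] x = x"
  using smap_eq_restr[of id n n x] smap_id[of x n] by (simp add: simp_op_def)

lemma restr_0_1 [simp]: "x \<in> lev X (Suc 0) \<Longrightarrow> restr X (Suc 0) [0, Suc 0] x = x"
  using restr_upt[of x 1] by (simp add: upt_rec)

lemma restr_0_1_2 [simp]: "x \<in> lev X 2 \<Longrightarrow> restr X 2 [0, Suc 0, 2] x = x"
  using restr_upt[of x 2] by (simp add: upt_rec eval_nat_numeral)

lemma restr_smap:
  assumes \<theta>: "simp_op \<theta> m n" and x: "x \<in> lev X n" and l: "simp_list l m"
  shows "restr X m l (smap X \<theta> m n x) = restr X n (map \<theta> l) x"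
proof -
  have "restr X m l (smap X \<theta> m n x) = restr X n (map (\<lambda>i. map \<theta> [0..<Suc m] ! i) l) x"
    using assms by (simp add: smap_eq_restr simp_list_map simp_list_upt del: upt_Suc)
  also have "map (\<lambda>i. map \<theta> [0..<Suc m] ! i) l = map \<theta> l"
    using l unfolding simp_list_def by (auto simp del: upt_Suc simp: nth_append less_Suc_eq_le)
  finally show ?thesis .
qed

lemma restr_prefix:
  assumes x: "x \<in> lev X (Suc m)" and l: "simp_list l m"
  shows "restr X m l (restr X (Suc m) [0..<Suc m] x) = restr X (Suc m) l x"
proof -
  have "simp_list [0..<Suc m] (Suc m)"
    by (auto simp del: upt_Suc simp: simp_list_def)
  then have "restr X m l (restr X (Suc m) [0..<Suc m] x) = restr X (Suc m) (map (\<lambda>i. [0..<Suc m] ! i) l) x"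
    using x l by (simp del: upt_Suc)
  also have "map (\<lambda>i. [0..<Suc m] ! i) l = l"
    using l unfolding simp_list_def by (intro map_idI) (auto simp del: upt_Suc)
  finally show ?thesis .
qed

end

locale two_segal_set = simplicial_set +
  assumes two_segal: "two_segal X"
begin

lemma two_segal_restr:
  assumes n: "3 \<le> n" "i < j" "j \<le> n" and a: "a \<in> lev X (j - i)" and b: "b \<in> lev X (n - (j - i) + 1)"
    and ab: "restr X (j - i) [0, j - i] a = restr X (n - (j - i) + 1) [i, i + 1] b"
  shows "\<exists>!x. x \<in> lev X n \<and> restr X n [i..<Suc j] x = a \<and>
                restr X n ([0..<Suc i] @ [j..<Suc n]) x = b"
proof -
  let ?edge_a = "\<lambda>t. if t = 0 then 0 else j - i"
  let ?edge_b = "\<lambda>t. if t = 0 then i else i + 1"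
  let ?inner = "\<lambda>t::nat. i + t"
  let ?outer = "\<lambda>t. if t \<le> i then t else t + (j - i) - 1"
  have ops: "simp_op ?edge_a 1 (j - i)" "simp_op ?edge_b 1 (n - (j - i) + 1)"
    "simp_op ?inner (j - i) n" "simp_op ?outer (n - (j - i) + 1) n"
    using n unfolding simp_op_def by auto
  have "map ?inner [0..<Suc (j - i)] = [i..<Suc j]"
    using n by (intro nth_equalityI) (auto simp del: upt_Suc)
  moreover have "map ?outer [0..<Suc (n - (j - i) + 1)] = [0..<Suc i] @ [j..<Suc n]"
    using n by (intro nth_equalityI) (auto simp del: upt_Suc simp: nth_append)
  ultimately have faces: "smap X ?inner (j - i) n x = restr X n [i..<Suc j] x"
    "smap X ?outer (n - (j - i) + 1) n x = restr X n ([0..<Suc i] @ [j..<Suc n]) x"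
    if "x \<in> lev X n" for x
    using smap_eq_restr[OF ops(3) that] smap_eq_restr[OF ops(4) that] by simp_all
  have "smap X ?edge_a 1 (j - i) a = smap X ?edge_b 1 (n - (j - i) + 1) b"
    using ab smap_eq_restr[OF ops(1) a] smap_eq_restr[OF ops(2) b]
    by (simp add: upt_rec eval_nat_numeral)
  then have "\<exists>!x. x \<in> lev X n \<and> smap X ?inner (j - i) n x = a \<and> smap X ?outer (n - (j - i) + 1) n x = b"
    using two_segal n a b unfolding two_segal_def by blast
  then show ?thesis
    by (metis (no_types, lifting) faces)
qed

lemma ex1_glue_012_023:
  "\<sigma> \<in> lev X 2 \<Longrightarrow> \<tau> \<in> lev X 2 \<Longrightarrow> restr X 2 [0,2] \<sigma> = restr X 2 [0,1] \<tau> \<Longrightarrow>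
   \<exists>!w. w \<in> lev X 3 \<and> restr X 3 [0,1,2] w = \<sigma> \<and> restr X 3 [0,2,3] w = \<tau>"
  using two_segal_restr[of 3 0 2 \<sigma> \<tau>] by (simp add: upt_rec eval_nat_numeral)

lemma ex1_glue_123_013:
  "\<sigma> \<in> lev X 2 \<Longrightarrow> \<tau> \<in> lev X 2 \<Longrightarrow> restr X 2 [0,2] \<sigma> = restr X 2 [1,2] \<tau> \<Longrightarrow>
   \<exists>!w. w \<in> lev X 3 \<and> restr X 3 [1,2,3] w = \<sigma> \<and> restr X 3 [0,1,3] w = \<tau>"
  using two_segal_restr[of 3 1 3 \<sigma> \<tau>] by (simp add: upt_rec eval_nat_numeral)

lemma ex_glue_0123_034:
  "a \<in> lev X 3 \<Longrightarrow> b \<in> lev X 2 \<Longrightarrow> restr X 3 [0,3] a = restr X 2 [0,1] b \<Longrightarrow>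
   \<exists>w. w \<in> lev X 4 \<and> restr X 4 [0,1,2,3] w = a \<and> restr X 4 [0,3,4] w = b"
  using two_segal_restr[of 4 0 3 a b] by (simp add: upt_rec eval_nat_numeral) blast

lemma ex_glue_1234_014:
  "a \<in> lev X 3 \<Longrightarrow> b \<in> lev X 2 \<Longrightarrow> restr X 3 [0,3] a = restr X 2 [1,2] b \<Longrightarrow>
   \<exists>w. w \<in> lev X 4 \<and> restr X 4 [1,2,3,4] w = a \<and> restr X 4 [0,1,4] w = b"
  using two_segal_restr[of 4 1 4 a b] by (simp add: upt_rec eval_nat_numeral) blast

lemma ex_glue_123_0134:
  "a \<in> lev X 2 \<Longrightarrow> b \<in> lev X 3 \<Longrightarrow> restr X 2 [0,2] a = restr X 3 [1,2] b \<Longrightarrow>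
   \<exists>w. w \<in> lev X 4 \<and> restr X 4 [1,2,3] w = a \<and> restr X 4 [0,1,3,4] w = b"
  using two_segal_restr[of 4 1 3 a b] by (simp add: upt_rec eval_nat_numeral) blast

lemma eq_by_012_023:
  "w \<in> lev X 3 \<Longrightarrow> w' \<in> lev X 3 \<Longrightarrow> restr X 3 [0,1,2] w = restr X 3 [0,1,2] w' \<Longrightarrow>
   restr X 3 [0,2,3] w = restr X 3 [0,2,3] w' \<Longrightarrow> w = w'"
  using ex1_glue_012_023[of "restr X 3 [0,1,2] w" "restr X 3 [0,2,3] w"] by (auto simp: restr_closed)

lemma eq_by_123_013:
  "w \<in> lev X 3 \<Longrightarrow> w' \<in> lev X 3 \<Longrightarrow> restr X 3 [1,2,3] w = restr X 3 [1,2,3] w' \<Longrightarrow>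
   restr X 3 [0,1,3] w = restr X 3 [0,1,3] w' \<Longrightarrow> w = w'"
  using ex1_glue_123_013[of "restr X 3 [1,2,3] w" "restr X 3 [0,1,3] w"] by (auto simp: restr_closed)

lemma ex1_glue_prefix_last:
  assumes m: "1 \<le> m" and y: "y \<in> lev X m" and b: "b \<in> lev X 2"
    and yb: "restr X m [0,m] y = restr X 2 [0,1] b"
  shows "\<exists>!x. x \<in> lev X (Suc m) \<and> restr X (Suc m) [0..<Suc m] x = y \<and> restr X (Suc m) [0,m,Suc m] x = b"
proof (cases "m = 1")
  case True
  have "\<exists>!x. x \<in> lev X 2 \<and> restr X 2 [0,1] x = y \<and> restr X 2 [0,1,2] x = b"
  proof (rule ex1I[of _ b])
    show "b \<in> lev X 2 \<and> restr X 2 [0,1] b = y \<and> restr X 2 [0,1,2] b = b"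
      using True y b yb by simp
    show "x = b" if "x \<in> lev X 2 \<and> restr X 2 [0,1] x = y \<and> restr X 2 [0,1,2] x = b" for x
      using that restr_0_1_2[of x] by simp
  qed
  moreover have "Suc m = 2" "[0..<2] = [0,1::nat]"
    using True by (simp_all add: upt_rec)
  ultimately show ?thesis
    using True by (simp only:)
next
  case False
  have "m - 0 = m" "Suc m - m + 1 = 2" "0 + 1 = (1::nat)"
    "[0..<Suc 0] @ [m..<Suc (Suc m)] = [0, m, Suc m]"
    by (simp_all add: upt_rec)
  note glue = two_segal_restr[of "Suc m" 0 m y b, unfolded this]
  show ?thesis
    using m False by (intro glue y b yb) auto
qed

lemma eq_by_prefix_last:
  assumes m: "1 \<le> m" and x: "x \<in> lev X (Suc m)" and x': "x' \<in> lev X (Suc m)"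
    and prefix: "restr X (Suc m) [0..<Suc m] x = restr X (Suc m) [0..<Suc m] x'"
    and last: "restr X (Suc m) [0,m,Suc m] x = restr X (Suc m) [0,m,Suc m] x'"
  shows "x = x'"
proof -
  let ?y = "restr X (Suc m) [0..<Suc m] x" and ?b = "restr X (Suc m) [0,m,Suc m] x"
  have "?y \<in> lev X m"
    using x by (intro restr_closed) (auto simp del: upt_Suc simp: simp_list_def)
  moreover have "?b \<in> lev X 2"
    using x by (intro restr_closed) auto
  moreover have "restr X m [0,m] ?y = restr X 2 [0,1] ?b"
    using restr_prefix[OF x, of "[0,m]"] x by simp
  ultimately have "\<exists>!z. z \<in> lev X (Suc m) \<and> restr X (Suc m) [0..<Suc m] z = ?y \<and>
                        restr X (Suc m) [0,m,Suc m] z = ?b"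
    using m by (intro ex1_glue_prefix_last)
  then show ?thesis
    using x x' prefix last by (auto elim: alt_ex1E)
qed

definition hor_cat :: "('a, 'a) cat" where
  "hor_cat = \<lparr>obj = lev X 1, arr = lev X 2, c_dom = restr X 2 [0,1], c_cod = restr X 2 [0,2],
     comp = (\<lambda>g f. restr X 3 [0,1,3]
               (THE w. w \<in> lev X 3 \<and> restr X 3 [0,1,2] w = f \<and> restr X 3 [0,2,3] w = g)),
     idm = restr X 1 [0,1,1]\<rparr>"

definition ver_cat :: "('a, 'a) cat" where
  "ver_cat = \<lparr>obj = lev X 1, arr = lev X 2, c_dom = restr X 2 [0,2], c_cod = restr X 2 [1,2],
     comp = (\<lambda>g f. restr X 3 [0,2,3]
               (THE w. w \<in> lev X 3 \<and> restr X 3 [0,1,3] w = f \<and> restr X 3 [1,2,3] w = g)),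
     idm = restr X 1 [0,0,1]\<rparr>"

lemma hor_cat_simps [simp]:
  "obj hor_cat = lev X 1" "arr hor_cat = lev X 2"
  "c_dom hor_cat = restr X 2 [0,1]" "c_cod hor_cat = restr X 2 [0,2]" "idm hor_cat = restr X 1 [0,1,1]"
  unfolding hor_cat_def by simp_all

lemma ver_cat_simps [simp]:
  "obj ver_cat = lev X 1" "arr ver_cat = lev X 2"
  "c_dom ver_cat = restr X 2 [0,2]" "c_cod ver_cat = restr X 2 [1,2]" "idm ver_cat = restr X 1 [0,0,1]"
  unfolding ver_cat_def by simp_all

lemma hom_hor_cat: "hom hor_cat a b = {f \<in> lev X 2. restr X 2 [0,1] f = a \<and> restr X 2 [0,2] f = b}"
  unfolding hom_def by simp

lemma hom_ver_cat: "hom ver_cat a b = {f \<in> lev X 2. restr X 2 [0,2] f = a \<and> restr X 2 [1,2] f = b}"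
  unfolding hom_def by simp

lemma hor_comp_faces:
  assumes w: "w \<in> lev X 3"
  shows "comp hor_cat (restr X 3 [0,2,3] w) (restr X 3 [0,1,2] w) = restr X 3 [0,1,3] w"
proof -
  have "(THE w'. w' \<in> lev X 3 \<and> restr X 3 [0,1,2] w' = restr X 3 [0,1,2] w \<and>
                 restr X 3 [0,2,3] w' = restr X 3 [0,2,3] w) = w"
    by (rule the_equality) (use w eq_by_012_023 in auto)
  then show ?thesis
    unfolding hor_cat_def by simp
qed

lemma ver_comp_faces:
  assumes w: "w \<in> lev X 3"
  shows "comp ver_cat (restr X 3 [1,2,3] w) (restr X 3 [0,1,3] w) = restr X 3 [0,2,3] w"
proof -
  have "(THE w'. w' \<in> lev X 3 \<and> restr X 3 [0,1,3] w' = restr X 3 [0,1,3] w \<and>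
                 restr X 3 [1,2,3] w' = restr X 3 [1,2,3] w) = w"
    by (rule the_equality) (use w eq_by_123_013 in auto)
  then show ?thesis
    unfolding ver_cat_def by simp
qed

lemma hor_comp_restr:
  "x \<in> lev X n \<Longrightarrow> simp_list [a,b,c,d] n \<Longrightarrow>
   comp hor_cat (restr X n [a,c,d] x) (restr X n [a,b,c] x) = restr X n [a,b,d] x"
  using hor_comp_faces[of "restr X n [a,b,c,d] x"] by (simp add: restr_closed)

lemma ver_comp_restr:
  "x \<in> lev X n \<Longrightarrow> simp_list [a,b,c,d] n \<Longrightarrow>
   comp ver_cat (restr X n [b,c,d] x) (restr X n [a,b,d] x) = restr X n [a,c,d] x"
  using ver_comp_faces[of "restr X n [a,b,c,d] x"] by (simp add: restr_closed)

lemma hor_comp_in_hom: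
  assumes "f \<in> lev X 2" "g \<in> lev X 2" "restr X 2 [0,2] f = restr X 2 [0,1] g"
  shows "comp hor_cat g f \<in> hom hor_cat (restr X 2 [0,1] f) (restr X 2 [0,2] g)"
proof -
  obtain w where w: "w \<in> lev X 3" "restr X 3 [0,1,2] w = f" "restr X 3 [0,2,3] w = g"
    using ex1_glue_012_023[OF assms] by blast
  then have "comp hor_cat g f = restr X 3 [0,1,3] w"
    using hor_comp_faces by blast
  then show ?thesis
    using w by (auto simp: hom_hor_cat restr_closed)
qed

lemma ver_comp_in_hom:
  assumes "f \<in> lev X 2" "g \<in> lev X 2" "restr X 2 [1,2] f = restr X 2 [0,2] g"
  shows "comp ver_cat g f \<in> hom ver_cat (restr X 2 [0,2] f) (restr X 2 [1,2] g)"
proof -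
  obtain w where w: "w \<in> lev X 3" "restr X 3 [1,2,3] w = g" "restr X 3 [0,1,3] w = f"
    using ex1_glue_123_013[OF assms(2,1) assms(3)[symmetric]] by blast
  then have "comp ver_cat g f = restr X 3 [0,2,3] w"
    using ver_comp_faces by blast
  then show ?thesis
    using w by (auto simp: hom_ver_cat restr_closed)
qed

lemma hor_comp_assoc:
  assumes f: "f \<in> lev X 2" and g: "g \<in> lev X 2" and h: "h \<in> lev X 2"
    and fg: "restr X 2 [0,2] f = restr X 2 [0,1] g" and gh: "restr X 2 [0,2] g = restr X 2 [0,1] h"
  shows "comp hor_cat h (comp hor_cat g f) = comp hor_cat (comp hor_cat h g) f"
proof -
  obtain w where w: "w \<in> lev X 3" "restr X 3 [0,1,2] w = f" "restr X 3 [0,2,3] w = g"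
    using ex1_glue_012_023[OF f g fg] by blast
  have "restr X 3 [0,3] w = restr X 2 [0,1] h"
    using w gh restr_restr[of "[0,2,3]" 3 2 "[0,2]" w] by simp
  then obtain W where W: "W \<in> lev X 4" "restr X 4 [0,1,2,3] W = w" "restr X 4 [0,3,4] W = h"
    using ex_glue_0123_034[OF w(1) h] by blast
  have "restr X 4 [0,1,2] W = restr X 3 [0,1,2] (restr X 4 [0,1,2,3] W)"
    "restr X 4 [0,2,3] W = restr X 3 [0,2,3] (restr X 4 [0,1,2,3] W)"
    using W(1) by simp_all
  then have "f = restr X 4 [0,1,2] W" "g = restr X 4 [0,2,3] W"
    using W(2) w by (simp_all del: restr_restr)
  then show ?thesis
    unfolding W(3)[symmetric] using W(1) by (simp add: hor_comp_restr)
qed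

lemma ver_comp_assoc:
  assumes f: "f \<in> lev X 2" and g: "g \<in> lev X 2" and h: "h \<in> lev X 2"
    and fg: "restr X 2 [1,2] f = restr X 2 [0,2] g" and gh: "restr X 2 [1,2] g = restr X 2 [0,2] h"
  shows "comp ver_cat h (comp ver_cat g f) = comp ver_cat (comp ver_cat h g) f"
proof -
  obtain w where w: "w \<in> lev X 3" "restr X 3 [1,2,3] w = h" "restr X 3 [0,1,3] w = g"
    using ex1_glue_123_013[OF h g gh[symmetric]] by blast
  have "restr X 3 [0,3] w = restr X 2 [1,2] f"
    using w fg restr_restr[of "[0,1,3]" 3 2 "[0,2]" w] by simp
  then obtain W where W: "W \<in> lev X 4" "restr X 4 [1,2,3,4] W = w" "restr X 4 [0,1,4] W = f"
    using ex_glue_1234_014[OF w(1) f] by blast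
  have "restr X 4 [2,3,4] W = restr X 3 [1,2,3] (restr X 4 [1,2,3,4] W)"
    "restr X 4 [1,2,4] W = restr X 3 [0,1,3] (restr X 4 [1,2,3,4] W)"
    using W(1) by simp_all
  then have "h = restr X 4 [2,3,4] W" "g = restr X 4 [1,2,4] W"
    using W(2) w by (simp_all del: restr_restr)
  then show ?thesis
    unfolding W(3)[symmetric] using W(1) by (simp add: ver_comp_restr)
qed

lemma category_hor_cat: "is_category hor_cat"
  unfolding is_category_def
proof (intro conjI ballI impI)
  fix f
  assume f: "f \<in> arr hor_cat"
  then show "c_dom hor_cat f \<in> obj hor_cat" "c_cod hor_cat f \<in> obj hor_cat"
    by (auto intro!: restr_closed)
  show "comp hor_cat f (idm hor_cat (c_dom hor_cat f)) = f"
    using f hor_comp_restr[of f 2 0 1 1 2] by simp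
  show "comp hor_cat (idm hor_cat (c_cod hor_cat f)) f = f"
    using f hor_comp_restr[of f 2 0 1 2 2] by simp
next
  fix a
  assume "a \<in> obj hor_cat"
  then show "idm hor_cat a \<in> hom hor_cat a a"
    by (auto simp: hom_hor_cat intro!: restr_closed)
next
  fix f g
  assume "f \<in> arr hor_cat" "g \<in> arr hor_cat" "c_cod hor_cat f = c_dom hor_cat g"
  then show "comp hor_cat g f \<in> hom hor_cat (c_dom hor_cat f) (c_cod hor_cat g)"
    using hor_comp_in_hom by simp
next
  fix f g h
  assume "f \<in> arr hor_cat" "g \<in> arr hor_cat" "h \<in> arr hor_cat"
    "c_cod hor_cat f = c_dom hor_cat g" "c_cod hor_cat g = c_dom hor_cat h"
  then show "comp hor_cat h (comp hor_cat g f) = comp hor_cat (comp hor_cat h g) f"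
    using hor_comp_assoc by simp
qed

lemma category_ver_cat: "is_category ver_cat"
  unfolding is_category_def
proof (intro conjI ballI impI)
  fix f
  assume f: "f \<in> arr ver_cat"
  then show "c_dom ver_cat f \<in> obj ver_cat" "c_cod ver_cat f \<in> obj ver_cat"
    by (auto intro!: restr_closed)
  show "comp ver_cat f (idm ver_cat (c_dom ver_cat f)) = f"
    using f ver_comp_restr[of f 2 0 0 1 2] by simp
  show "comp ver_cat (idm ver_cat (c_cod ver_cat f)) f = f"
    using f ver_comp_restr[of f 2 0 1 1 2] by simp
next
  fix a
  assume "a \<in> obj ver_cat"
  then show "idm ver_cat a \<in> hom ver_cat a a"
    by (auto simp: hom_ver_cat intro!: restr_closed)
next
  fix f g
  assume "f \<in> arr ver_cat" "g \<in> arr ver_cat" "c_cod ver_cat f = c_dom ver_cat g"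
  then show "comp ver_cat g f \<in> hom ver_cat (c_dom ver_cat f) (c_cod ver_cat g)"
    using ver_comp_in_hom by simp
next
  fix f g h
  assume "f \<in> arr ver_cat" "g \<in> arr ver_cat" "h \<in> arr ver_cat"
    "c_cod ver_cat f = c_dom ver_cat g" "c_cod ver_cat g = c_dom ver_cat h"
  then show "comp ver_cat h (comp ver_cat g f) = comp ver_cat (comp ver_cat h g) f"
    using ver_comp_assoc by simp
qed

definition is_square :: "'a \<Rightarrow> 'a \<Rightarrow> 'a \<Rightarrow> 'a \<Rightarrow> bool" where
  "is_square f g u v \<longleftrightarrow> (\<exists>w\<in>lev X 3. restr X 3 [0,2,3] w = f \<and> restr X 3 [1,2,3] w = g \<and>
                                    restr X 3 [0,1,2] w = u \<and> restr X 3 [0,1,3] w = v)"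

definition squares_dbl :: "('a, 'a, 'a) dbl" where
  "squares_dbl = \<lparr>hcat = hor_cat, vcat = ver_cat, sq = is_square\<rparr>"

lemma squares_dbl_simps [simp]:
  "hcat squares_dbl = hor_cat" "vcat squares_dbl = ver_cat" "sq squares_dbl = is_square"
  unfolding squares_dbl_def by simp_all

lemma is_squareI:
  "w \<in> lev X 3 \<Longrightarrow>
   is_square (restr X 3 [0,2,3] w) (restr X 3 [1,2,3] w) (restr X 3 [0,1,2] w) (restr X 3 [0,1,3] w)"
  unfolding is_square_def by blast

lemma is_square_hor_comp:
  assumes "is_square f g u v" "is_square f' g' v w"
  shows "is_square (comp hor_cat f' f) (comp hor_cat g' g) u w"
proof -
  obtain P where P: "P \<in> lev X 3" "restr X 3 [0,2,3] P = f" "restr X 3 [1,2,3] P = g"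
      "restr X 3 [0,1,2] P = u" "restr X 3 [0,1,3] P = v"
    using assms(1) unfolding is_square_def by blast
  obtain Q where Q: "Q \<in> lev X 3" "restr X 3 [0,2,3] Q = f'" "restr X 3 [1,2,3] Q = g'"
      "restr X 3 [0,1,2] Q = v" "restr X 3 [0,1,3] Q = w"
    using assms(2) unfolding is_square_def by blast
  have "restr X 2 [0,2] (restr X 3 [1,2,3] P) = restr X 2 [1,2] (restr X 3 [0,1,3] P)"
    using P(1) by simp
  also have "\<dots> = restr X 2 [1,2] (restr X 3 [0,1,2] Q)"
    using P(5) Q(4) by simp
  also have "\<dots> = restr X 3 [1,2] Q"
    using Q(1) by simp
  finally have glue: "restr X 2 [0,2] (restr X 3 [1,2,3] P) = restr X 3 [1,2] Q" .
  obtain W where W: "W \<in> lev X 4" "restr X 4 [1,2,3] W = restr X 3 [1,2,3] P"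
      "restr X 4 [0,1,3,4] W = Q"
    using ex_glue_123_0134[OF restr_closed[OF _ _ P(1)] Q(1) glue] by auto
  have PW: "P = restr X 4 [0,1,2,3] W"
  proof (rule eq_by_123_013[OF P(1)])
    show "restr X 4 [0,1,2,3] W \<in> lev X 3"
      using W(1) by (simp add: restr_closed)
    show "restr X 3 [1,2,3] P = restr X 3 [1,2,3] (restr X 4 [0,1,2,3] W)"
      using W(1,2) by simp
    have "restr X 3 [0,1,3] (restr X 4 [0,1,2,3] W) = restr X 3 [0,1,2] (restr X 4 [0,1,3,4] W)"
      using W(1) by simp
    then show "restr X 3 [0,1,3] P = restr X 3 [0,1,3] (restr X 4 [0,1,2,3] W)"
      using P(5) Q(4) W(3) by simp
  qed
  have "is_square (comp hor_cat (restr X 3 [0,2,3] Q) (restr X 3 [0,2,3] P))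
          (comp hor_cat (restr X 3 [1,2,3] Q) (restr X 3 [1,2,3] P)) (restr X 3 [0,1,2] P) (restr X 3 [0,1,3] Q)"
    unfolding PW W(3)[symmetric] using is_squareI[OF restr_closed[of "[0,1,2,4]" 4 3 W]] W(1)
    by (simp add: hor_comp_restr)
  then show ?thesis
    using P Q by simp
qed

lemma is_square_ver_comp:
  assumes "is_square f g u v" "is_square g h u' v'"
  shows "is_square f h (comp ver_cat u' u) (comp ver_cat v' v)"
proof -
  obtain P where P: "P \<in> lev X 3" "restr X 3 [0,2,3] P = f" "restr X 3 [1,2,3] P = g"
      "restr X 3 [0,1,2] P = u" "restr X 3 [0,1,3] P = v"
    using assms(1) unfolding is_square_def by blast
  obtain Q where Q: "Q \<in> lev X 3" "restr X 3 [0,2,3] Q = g" "restr X 3 [1,2,3] Q = h"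
      "restr X 3 [0,1,2] Q = u'" "restr X 3 [0,1,3] Q = v'"
    using assms(2) unfolding is_square_def by blast
  have "restr X 3 [0,3] Q = restr X 2 [0,2] (restr X 3 [0,2,3] Q)"
    using Q(1) by simp
  also have "\<dots> = restr X 2 [0,2] (restr X 3 [1,2,3] P)"
    using P(3) Q(2) by simp
  also have "\<dots> = restr X 2 [1,2] (restr X 3 [0,1,3] P)"
    using P(1) by simp
  finally have glue: "restr X 3 [0,3] Q = restr X 2 [1,2] (restr X 3 [0,1,3] P)" .
  obtain W where W: "W \<in> lev X 4" "restr X 4 [1,2,3,4] W = Q"
      "restr X 4 [0,1,4] W = restr X 3 [0,1,3] P"
    using ex_glue_1234_014[OF Q(1) restr_closed[OF _ _ P(1)] glue] by auto
  have PW: "P = restr X 4 [0,1,3,4] W"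
  proof (rule eq_by_123_013[OF P(1)])
    show "restr X 4 [0,1,3,4] W \<in> lev X 3"
      using W(1) by (simp add: restr_closed)
    have "restr X 3 [1,2,3] (restr X 4 [0,1,3,4] W) = restr X 3 [0,2,3] (restr X 4 [1,2,3,4] W)"
      using W(1) by simp
    then show "restr X 3 [1,2,3] P = restr X 3 [1,2,3] (restr X 4 [0,1,3,4] W)"
      using P(3) Q(2) W(2) by simp
    show "restr X 3 [0,1,3] P = restr X 3 [0,1,3] (restr X 4 [0,1,3,4] W)"
      using W(1,3) by simp
  qed
  have "is_square (restr X 3 [0,2,3] P) (restr X 3 [1,2,3] Q)
          (comp ver_cat (restr X 3 [0,1,2] Q) (restr X 3 [0,1,2] P))
          (comp ver_cat (restr X 3 [0,1,3] Q) (restr X 3 [0,1,3] P))"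
    unfolding PW W(2)[symmetric] using is_squareI[OF restr_closed[of "[0,2,3,4]" 4 3 W]] W(1)
    by (simp add: ver_comp_restr)
  then show ?thesis
    using P Q by simp
qed

lemma flat_double_category_squares_dbl: "flat_double_category squares_dbl"
  unfolding flat_double_category_def Let_def squares_dbl_simps
proof (intro conjI allI impI ballI)
  fix f g u v
  assume "is_square f g u v"
  then obtain w where w: "w \<in> lev X 3" "restr X 3 [0,2,3] w = f" "restr X 3 [1,2,3] w = g"
      "restr X 3 [0,1,2] w = u" "restr X 3 [0,1,3] w = v"
    unfolding is_square_def by blast
  then show "f \<in> arr hor_cat" "g \<in> arr hor_cat" "u \<in> arr ver_cat" "v \<in> arr ver_cat"
    by (auto simp: restr_closed)
  show "c_dom ver_cat u = c_dom hor_cat f" "c_cod ver_cat u = c_dom hor_cat g"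
    "c_dom ver_cat v = c_cod hor_cat f" "c_cod ver_cat v = c_cod hor_cat g"
    unfolding ver_cat_simps hor_cat_simps w(2-5)[symmetric] using w(1) by simp_all
next
  fix u
  assume u: "u \<in> arr ver_cat"
  then show "is_square (idm hor_cat (c_dom ver_cat u)) (idm hor_cat (c_cod ver_cat u)) u u"
    using is_squareI[OF restr_closed[of "[0,1,2,2]" 2 3 u]] by simp
next
  fix f
  assume f: "f \<in> arr hor_cat"
  then show "is_square f f (idm ver_cat (c_dom hor_cat f)) (idm ver_cat (c_cod hor_cat f))"
    using is_squareI[OF restr_closed[of "[0,0,1,2]" 2 3 f]] by simp
next
  fix f g u v f' g' w
  assume "is_square f g u v" "is_square f' g' v w"
  then show "is_square (comp hor_cat f' f) (comp hor_cat g' g) u w"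
    by (rule is_square_hor_comp)
next
  fix f g u v h u' v'
  assume "is_square f g u v" "is_square g h u' v'"
  then show "is_square f h (comp ver_cat u' u) (comp ver_cat v' v)"
    by (rule is_square_ver_comp)
qed (simp_all add: category_hor_cat category_ver_cat)

lemma Ssq_levD:
  assumes "(A, h, v) \<in> Ssq_lev squares_dbl Z n"
  shows Ssq_lev_obj: "\<And>j k. j \<le> k \<Longrightarrow> k \<le> n \<Longrightarrow> A j k \<in> lev X 1"
    and Ssq_lev_diag: "\<And>j. j \<le> n \<Longrightarrow> A j j = Z"
    and Ssq_lev_hor: "\<And>j k. j \<le> k \<Longrightarrow> k < n \<Longrightarrow> h j k \<in> hom hor_cat (A j k) (A j (Suc k))"
    and Ssq_lev_ver: "\<And>j k. j < k \<Longrightarrow> k \<le> n \<Longrightarrow> v j k \<in> hom ver_cat (A j k) (A (Suc j) k)"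
    and Ssq_lev_square:
      "\<And>j k. j < k \<Longrightarrow> k < n \<Longrightarrow> is_square (h j k) (h (Suc j) k) (v j k) (v j (Suc k))"
    and Ssq_lev_undef_obj: "\<And>j k. \<not> (j \<le> k \<and> k \<le> n) \<Longrightarrow> A j k = undefined"
    and Ssq_lev_undef_hor: "\<And>j k. \<not> (j \<le> k \<and> k < n) \<Longrightarrow> h j k = undefined"
    and Ssq_lev_undef_ver: "\<And>j k. \<not> (j < k \<and> k \<le> n) \<Longrightarrow> v j k = undefined"
  using assms unfolding Ssq_lev_def by auto

definition grid_obj :: "nat \<Rightarrow> 'a \<Rightarrow> nat \<Rightarrow> nat \<Rightarrow> 'a" where
  "grid_obj n x = (\<lambda>j k. if j \<le> k \<and> k \<le> n then restr X n [j,k] x else undefined)"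

definition grid_hor :: "nat \<Rightarrow> 'a \<Rightarrow> nat \<Rightarrow> nat \<Rightarrow> 'a" where
  "grid_hor n x = (\<lambda>j k. if j \<le> k \<and> k < n then restr X n [j,k,Suc k] x else undefined)"

definition grid_ver :: "nat \<Rightarrow> 'a \<Rightarrow> nat \<Rightarrow> nat \<Rightarrow> 'a" where
  "grid_ver n x = (\<lambda>j k. if j < k \<and> k \<le> n then restr X n [j,Suc j,k] x else undefined)"

definition grid ::
    "nat \<Rightarrow> 'a \<Rightarrow> (nat \<Rightarrow> nat \<Rightarrow> 'a) \<times> (nat \<Rightarrow> nat \<Rightarrow> 'a) \<times> (nat \<Rightarrow> nat \<Rightarrow> 'a)" where
  "grid n x = (grid_obj n x, grid_hor n x, grid_ver n x)"

lemma grid_eqD: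
  assumes "grid n x = (A, h, v)"
  shows "\<And>j k. j \<le> k \<Longrightarrow> k \<le> n \<Longrightarrow> A j k = restr X n [j,k] x"
    and "\<And>j k. j \<le> k \<Longrightarrow> k < n \<Longrightarrow> h j k = restr X n [j,k,Suc k] x"
    and "\<And>j k. j < k \<Longrightarrow> k \<le> n \<Longrightarrow> v j k = restr X n [j,Suc j,k] x"
  using assms by (auto simp: grid_def grid_obj_def grid_hor_def grid_ver_def)

lemma hpath_grid:
  "x \<in> lev X n \<Longrightarrow> a \<le> b \<Longrightarrow> b + d \<le> n \<Longrightarrow>
   hpath hor_cat (grid_obj n x) (grid_hor n x) a b d = restr X n [a,b,b+d] x"
proof (induction d)
  case 0
  then show ?case
    by (simp add: grid_obj_def)
next
  case (Suc d)
  then have "hpath hor_cat (grid_obj n x) (grid_hor n x) a b (Suc d) =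
             comp hor_cat (restr X n [a,b+d,Suc (b+d)] x) (restr X n [a,b,b+d] x)"
    by (simp add: grid_hor_def)
  also have "\<dots> = restr X n [a,b,Suc (b+d)] x"
    using Suc.prems by (intro hor_comp_restr) auto
  finally show ?case
    by simp
qed

lemma vpath_grid:
  "x \<in> lev X n \<Longrightarrow> a + d \<le> b \<Longrightarrow> b \<le> n \<Longrightarrow>
   vpath ver_cat (grid_obj n x) (grid_ver n x) a b d = restr X n [a,a+d,b] x"
proof (induction d)
  case 0
  then show ?case
    by (simp add: grid_obj_def)
next
  case (Suc d)
  then have "vpath ver_cat (grid_obj n x) (grid_ver n x) a b (Suc d) =
             comp ver_cat (restr X n [a+d,Suc (a+d),b] x) (restr X n [a,a+d,b] x)"
    by (simp add: grid_ver_def)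
  also have "\<dots> = restr X n [a,Suc (a+d),b] x"
    using Suc.prems by (intro ver_comp_restr) auto
  finally show ?case
    by simp
qed

lemma grid_smap:
  assumes \<theta>: "simp_op \<theta> m n" and x: "x \<in> lev X n"
  shows "grid m (smap X \<theta> m n x) = Ssq_map squares_dbl \<theta> m n (grid n x)"
proof -
  have mono: "\<theta> i \<le> \<theta> j" if "i \<le> j" "j \<le> m" for i j
    using \<theta> that unfolding simp_op_def by auto
  have bound: "\<theta> i \<le> n" if "i \<le> m" for i
    using \<theta> that unfolding simp_op_def by auto
  have "grid_obj m (smap X \<theta> m n x) j k =
        (if j \<le> k \<and> k \<le> m then grid_obj n x (\<theta> j) (\<theta> k) else undefined)" for j k
    using mono[of j k] bound[of k] by (simp add: grid_obj_def restr_smap[OF \<theta> x])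
  moreover have "grid_hor m (smap X \<theta> m n x) j k =
        (if j \<le> k \<and> k < m then hpath hor_cat (grid_obj n x) (grid_hor n x) (\<theta> j) (\<theta> k) (\<theta> (Suc k) - \<theta> k)
         else undefined)" for j k
  proof (cases "j \<le> k \<and> k < m")
    case True
    then have "hpath hor_cat (grid_obj n x) (grid_hor n x) (\<theta> j) (\<theta> k) (\<theta> (Suc k) - \<theta> k) =
               restr X n [\<theta> j, \<theta> k, \<theta> (Suc k)] x"
      using hpath_grid[OF x] mono[of j k] mono[of k "Suc k"] bound[of "Suc k"] by simp
    with True show ?thesis
      by (simp add: grid_hor_def restr_smap[OF \<theta> x])
  qed (auto simp: grid_hor_def)
  moreover have "grid_ver m (smap X \<theta> m n x) j k =
        (if j < k \<and> k \<le> m then vpath ver_cat (grid_obj n x) (grid_ver n x) (\<theta> j) (\<theta> k) (\<theta> (Suc j) - \<theta> j)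
         else undefined)" for j k
  proof (cases "j < k \<and> k \<le> m")
    case True
    then have "vpath ver_cat (grid_obj n x) (grid_ver n x) (\<theta> j) (\<theta> k) (\<theta> (Suc j) - \<theta> j) =
               restr X n [\<theta> j, \<theta> (Suc j), \<theta> k] x"
      using vpath_grid[OF x] mono[of j "Suc j"] mono[of "Suc j" k] bound[of k] by simp
    with True show ?thesis
      by (simp add: grid_ver_def restr_smap[OF \<theta> x])
  qed (auto simp: grid_ver_def)
  ultimately show ?thesis
    unfolding grid_def Ssq_map_def by (simp add: fun_eq_iff)
qed

lemma restr_last_column:
  assumes g: "(A, h, v) \<in> Ssq_lev squares_dbl Z (Suc m)" and x: "x \<in> lev X (Suc m)"
    and top: "restr X (Suc m) [0,m,Suc m] x = h 0 m"
    and left: "\<And>j. j < m \<Longrightarrow> restr X (Suc m) [j,Suc j,m] x = v j m"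
  shows restr_last_column_hor: "\<And>j. j \<le> m \<Longrightarrow> restr X (Suc m) [j,m,Suc m] x = h j m"
    and restr_last_column_ver: "\<And>j. j < m \<Longrightarrow> restr X (Suc m) [j,Suc j,Suc m] x = v j (Suc m)"
proof -
  have cell: "restr X (Suc m) [Suc j,m,Suc m] x = h (Suc j) m \<and> restr X (Suc m) [j,Suc j,Suc m] x = v j (Suc m)"
    if j: "j < m" and hor_j: "restr X (Suc m) [j,m,Suc m] x = h j m" for j
  proof -
    obtain w where w: "w \<in> lev X 3" "restr X 3 [0,2,3] w = h j m" "restr X 3 [1,2,3] w = h (Suc j) m"
        "restr X 3 [0,1,2] w = v j m" "restr X 3 [0,1,3] w = v j (Suc m)"
      using Ssq_lev_square[OF g j] unfolding is_square_def by auto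
    define z where "z = restr X (Suc m) [j,Suc j,m,Suc m] x"
    have z: "z \<in> lev X 3"
      unfolding z_def using x j by (intro restr_closed) auto
    have "restr X 3 [0,1,2] z = restr X 3 [0,1,2] w" "restr X 3 [0,2,3] z = restr X 3 [0,2,3] w"
      unfolding z_def using x j left[OF j] hor_j w by simp_all
    then have "z = w"
      by (rule eq_by_012_023[OF z w(1)])
    moreover have "restr X (Suc m) [Suc j,m,Suc m] x = restr X 3 [1,2,3] z"
      "restr X (Suc m) [j,Suc j,Suc m] x = restr X 3 [0,1,3] z"
      unfolding z_def using x j by simp_all
    ultimately show ?thesis
      using w by simp
  qed
  show hor: "restr X (Suc m) [j,m,Suc m] x = h j m" if "j \<le> m" for j
    using that
  proof (induction j)
    case 0
    then show ?case
      using top by simp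
  next
    case (Suc j)
    then show ?case
      using cell[of j] by simp
  qed
  show "restr X (Suc m) [j,Suc j,Suc m] x = v j (Suc m)" if "j < m" for j
    using cell[OF that hor] that by simp
qed

end

lemma Ssq_lev_restrict:
  assumes "(A, h, v) \<in> Ssq_lev D Z n" "m \<le> n"
  shows "(\<lambda>j k. if j \<le> k \<and> k \<le> m then A j k else undefined,
          \<lambda>j k. if j \<le> k \<and> k < m then h j k else undefined,
          \<lambda>j k. if j < k \<and> k \<le> m then v j k else undefined) \<in> Ssq_lev D Z m"
  using assms unfolding Ssq_lev_def by auto

locale reduced_two_segal = two_segal_set +
  assumes reduced: "reduced X"
begin

definition vertex :: 'a where
  "vertex = (THE p. lev X 0 = {p})"

definition base_edge :: 'a where
  "base_edge = restr X 0 [0,0] vertex"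

lemma lev0_eq: "lev X 0 = {vertex}"
proof -
  obtain p where "lev X 0 = {p}"
    using reduced unfolding reduced_def by blast
  then show ?thesis
    unfolding vertex_def by simp
qed

lemma base_edge_in [simp]: "base_edge \<in> lev X (Suc 0)"
  unfolding base_edge_def using lev0_eq by (intro restr_closed) auto

lemma restr_constant:
  assumes x: "x \<in> lev X n" and a: "a \<le> n"
  shows "restr X n (replicate (Suc k) a) x = restr X 0 (replicate (Suc k) 0) vertex"
proof -
  have "restr X n [a] x \<in> lev X 0"
    using restr_closed[of "[a]" n 0 x] x a by simp
  then have "restr X n [a] x = vertex"
    using lev0_eq by simp
  moreover have "restr X 0 (replicate (Suc k) 0) (restr X n [a] x) = restr X n (replicate (Suc k) a) x"
    using x a by (subst restr_restr) (auto simp: simp_list_def map_replicate_const)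
  ultimately show ?thesis
    by simp
qed

lemma restr_diag_edge [simp]: "x \<in> lev X n \<Longrightarrow> a \<le> n \<Longrightarrow> restr X n [a,a] x = base_edge"
  using restr_constant[of x n a 1] unfolding base_edge_def by (simp add: numeral_2_eq_2)

lemma restr_triangle_on_base_edge:
  assumes \<sigma>: "\<sigma> \<in> lev X 2" and base: "restr X 2 [i,j] \<sigma> = base_edge" and ij: "i \<le> j" "j \<le> 2"
    and l: "simp_list l (Suc 0)"
  shows "restr X 2 (map (\<lambda>t. [i,j] ! t) l) \<sigma> = restr X 0 (map (\<lambda>_. 0) l) vertex"
proof -
  have "restr X 2 (map (\<lambda>t. [i,j] ! t) l) \<sigma> = restr X (Suc 0) l (restr X 2 [i,j] \<sigma>)"
    using \<sigma> ij l by simp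
  also have "\<dots> = restr X (Suc 0) l (restr X 0 [0,0] vertex)"
    using base unfolding base_edge_def by (simp del: restr_diag_edge)
  also have "\<dots> = restr X 0 (map (\<lambda>t. [0,0] ! t) l) vertex"
    using l lev0_eq by (simp del: restr_diag_edge)
  also have "map (\<lambda>t. [0,0::nat] ! t) l = map (\<lambda>_. 0) l"
    using l unfolding simp_list_def by (auto simp: nth_Cons split: nat.splits)
  finally show ?thesis .
qed

(* The 3-simplices s_0012 and s_0112 share the face 023, and if s_01 = O both have a totally
   degenerate face 012; so they coincide, and comparing their faces 013 gives s_002 = s. *)
lemma triangle_eq_002_if_01_base:
  assumes \<sigma>: "\<sigma> \<in> lev X 2" and base: "restr X 2 [0,1] \<sigma> = base_edge"
  shows "\<sigma> = restr X 2 [0,0,2] \<sigma>"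
proof -
  define t where "t = restr X 2 [0,0,1,2] \<sigma>"
  define t' where "t' = restr X 2 [0,1,1,2] \<sigma>"
  have t: "t \<in> lev X 3" "t' \<in> lev X 3"
    unfolding t_def t'_def using \<sigma> by (auto intro!: restr_closed)
  have "restr X 3 [0,1,2] t = restr X 3 [0,1,2] t'"
    using restr_triangle_on_base_edge[OF \<sigma> base, of "[0,0,1]"]
      restr_triangle_on_base_edge[OF \<sigma> base, of "[0,1,1]"] \<sigma>
    unfolding t_def t'_def by simp
  moreover have "restr X 3 [0,2,3] t = restr X 3 [0,2,3] t'"
    using \<sigma> unfolding t_def t'_def by simp
  ultimately have "t = t'"
    by (rule eq_by_012_023[OF t])
  then have "restr X 3 [0,1,3] t = restr X 3 [0,1,3] t'"
    by simp
  then show ?thesis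
    using \<sigma> unfolding t_def t'_def by simp
qed

lemma triangle_eq_022_if_12_base:
  assumes \<sigma>: "\<sigma> \<in> lev X 2" and base: "restr X 2 [1,2] \<sigma> = base_edge"
  shows "\<sigma> = restr X 2 [0,2,2] \<sigma>"
proof -
  define t where "t = restr X 2 [0,1,1,2] \<sigma>"
  define t' where "t' = restr X 2 [0,1,2,2] \<sigma>"
  have t: "t \<in> lev X 3" "t' \<in> lev X 3"
    unfolding t_def t'_def using \<sigma> by (auto intro!: restr_closed)
  have "restr X 3 [1,2,3] t = restr X 3 [1,2,3] t'"
    using restr_triangle_on_base_edge[OF \<sigma> base, of "[0,0,1]"]
      restr_triangle_on_base_edge[OF \<sigma> base, of "[0,1,1]"] \<sigma>
    unfolding t_def t'_def by simp
  moreover have "restr X 3 [0,1,3] t = restr X 3 [0,1,3] t'"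
    using \<sigma> unfolding t_def t'_def by simp
  ultimately have "t = t'"
    by (rule eq_by_123_013[OF t])
  then have "restr X 3 [0,2,3] t = restr X 3 [0,2,3] t'"
    by simp
  then show ?thesis
    using \<sigma> unfolding t_def t'_def by simp
qed

lemma hom_hor_cat_from_base: "a \<in> lev X 1 \<Longrightarrow> hom hor_cat base_edge a = {restr X 1 [0,0,1] a}"
  using triangle_eq_002_if_01_base by (fastforce simp: hom_hor_cat intro: restr_closed)

lemma hom_ver_cat_to_base: "a \<in> lev X 1 \<Longrightarrow> hom ver_cat a base_edge = {restr X 1 [0,1,1] a}"
  using triangle_eq_022_if_12_base by (fastforce simp: hom_ver_cat intro: restr_closed)

lemma squares_category_squares_dbl: "squares_category squares_dbl base_edge"
  unfolding squares_category_def
  by (simp add: flat_double_category_squares_dbl hom_hor_cat_from_base hom_ver_cat_to_base)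

lemma grid_in_Ssq_lev:
  assumes x: "x \<in> lev X n"
  shows "grid n x \<in> Ssq_lev squares_dbl base_edge n"
  unfolding Ssq_lev_def grid_def squares_dbl_simps
proof (simp only: mem_Collect_eq prod.case, intro conjI allI impI)
  fix j k
  assume "j \<le> k \<and> k \<le> n"
  then show "grid_obj n x j k \<in> obj hor_cat"
    using x by (simp add: grid_obj_def restr_closed)
next
  fix j
  assume "j \<le> n"
  then show "grid_obj n x j j = base_edge"
    using x by (simp add: grid_obj_def)
next
  fix j k
  assume "j \<le> k \<and> k < n"
  then show "grid_hor n x j k \<in> hom hor_cat (grid_obj n x j k) (grid_obj n x j (Suc k))"
    using x by (simp add: grid_obj_def grid_hor_def hom_hor_cat restr_closed)
next
  fix j k
  assume "j < k \<and> k \<le> n"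
  then show "grid_ver n x j k \<in> hom ver_cat (grid_obj n x j k) (grid_obj n x (Suc j) k)"
    using x by (simp add: grid_obj_def grid_ver_def hom_ver_cat restr_closed)
next
  fix j k
  assume jk: "j < k \<and> k < n"
  let ?w = "restr X n [j,Suc j,k,Suc k] x"
  have "is_square (restr X 3 [0,2,3] ?w) (restr X 3 [1,2,3] ?w) (restr X 3 [0,1,2] ?w) (restr X 3 [0,1,3] ?w)"
    using x jk by (intro is_squareI restr_closed) auto
  then show "is_square (grid_hor n x j k) (grid_hor n x (Suc j) k) (grid_ver n x j k) (grid_ver n x j (Suc k))"
    using x jk by (simp add: grid_hor_def grid_ver_def)
qed (auto simp: grid_obj_def grid_hor_def grid_ver_def)

lemma simplex_eq_by_triangle_fan:
  "x \<in> lev X n \<Longrightarrow> x' \<in> lev X n \<Longrightarrow>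
   (\<And>k. k < n \<Longrightarrow> restr X n [0,k,Suc k] x = restr X n [0,k,Suc k] x') \<Longrightarrow> x = x'"
proof (induction n arbitrary: x x')
  case 0
  then show ?case
    using lev0_eq by auto
next
  case (Suc m)
  note x = Suc.prems(1,2) and fan = Suc.prems(3)
  show ?case
  proof (cases "m = 0")
    case True
    then have "restr X 2 [0,2] (restr X 1 [0,0,1] x) = restr X 2 [0,2] (restr X 1 [0,0,1] x')"
      using fan[of 0] by simp
    then show ?thesis
      using x True by simp
  next
    case False
    have simp_list_prefix: "simp_list [0..<Suc m] (Suc m)"
      by (auto simp: simp_list_def simp del: upt_Suc)
    have "restr X m [0,k,Suc k] (restr X (Suc m) [0..<Suc m] x) =
          restr X m [0,k,Suc k] (restr X (Suc m) [0..<Suc m] x')" if "k < m" for k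
      using restr_prefix[OF x(1), of "[0,k,Suc k]"] restr_prefix[OF x(2), of "[0,k,Suc k]"]
        fan[of k] that by simp
    moreover have "restr X (Suc m) [0..<Suc m] x \<in> lev X m" "restr X (Suc m) [0..<Suc m] x' \<in> lev X m"
      using restr_closed[OF simp_list_prefix] x by simp_all
    ultimately have prefix: "restr X (Suc m) [0..<Suc m] x = restr X (Suc m) [0..<Suc m] x'"
      using Suc.IH by blast
    have last: "restr X (Suc m) [0,m,Suc m] x = restr X (Suc m) [0,m,Suc m] x'"
      using fan[of m] by simp
    show ?thesis
      using False by (intro eq_by_prefix_last[OF _ x prefix last]) simp
  qed
qed

lemma inj_on_grid: "inj_on (grid n) (lev X n)"
proof (rule inj_onI)
  fix x x'
  assume x: "x \<in> lev X n" "x' \<in> lev X n" and eq: "grid n x = grid n x'"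
  have "restr X n [0,k,Suc k] x = restr X n [0,k,Suc k] x'" if "k < n" for k
    using fun_cong[OF fun_cong[OF arg_cong[OF eq, of "\<lambda>g. fst (snd g)"]], of 0 k] that
    by (simp add: grid_def grid_hor_def)
  then show "x = x'"
    using simplex_eq_by_triangle_fan[OF x] by blast
qed

lemma grid_eqI:
  assumes g: "(A, h, v) \<in> Ssq_lev squares_dbl base_edge n" and x: "x \<in> lev X n"
    and obj: "\<And>j k. j < k \<Longrightarrow> k \<le> n \<Longrightarrow> restr X n [j,k] x = A j k"
    and hor: "\<And>j k. j < k \<Longrightarrow> k < n \<Longrightarrow> restr X n [j,k,Suc k] x = h j k"
    and ver: "\<And>j k. Suc j < k \<Longrightarrow> k \<le> n \<Longrightarrow> restr X n [j,Suc j,k] x = v j k"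
  shows "grid n x = (A, h, v)"
proof -
  have obj': "restr X n [j,k] x = A j k" if "j \<le> k" "k \<le> n" for j k
    using that x obj Ssq_lev_diag[OF g] by (cases "j = k") auto
  have hor': "restr X n [j,k,Suc k] x = h j k" if "j \<le> k" "k < n" for j k
  proof (cases "j = k")
    case True
    have "h k k \<in> hom hor_cat base_edge (A k (Suc k))"
      using Ssq_lev_hor[OF g, of k k] Ssq_lev_diag[OF g, of k] that by simp
    then have "h k k = restr X 1 [0,0,1] (restr X n [k,Suc k] x)"
      using hom_hor_cat_from_base Ssq_lev_obj[OF g, of k "Suc k"] obj'[of k "Suc k"] that by auto
    then show ?thesis
      using True x that by simp
  qed (use that hor in simp)
  have ver': "restr X n [j,Suc j,k] x = v j k" if "j < k" "k \<le> n" for j k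
  proof (cases "k = Suc j")
    case True
    have "v j k \<in> hom ver_cat (A j k) base_edge"
      using Ssq_lev_ver[OF g, of j k] Ssq_lev_diag[OF g, of k] that True by simp
    then have "v j k = restr X 1 [0,1,1] (restr X n [j,k] x)"
      using hom_ver_cat_to_base Ssq_lev_obj[OF g, of j k] obj'[of j k] that by auto
    then show ?thesis
      using True x that by simp
  qed (use that ver in simp)
  show ?thesis
    unfolding grid_def grid_obj_def grid_hor_def grid_ver_def
    using obj' hor' ver' Ssq_lev_undef_obj[OF g] Ssq_lev_undef_hor[OF g] Ssq_lev_undef_ver[OF g]
    by (auto simp: fun_eq_iff)
qed

lemma grid_restrict_realized:
  assumes g: "(A, h, v) \<in> Ssq_lev squares_dbl base_edge n" and m: "m \<le> n"
    and surj_m: "Ssq_lev squares_dbl base_edge m \<subseteq> grid m ` lev X m"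
  obtains y where "y \<in> lev X m"
    and "\<And>j k. j \<le> k \<Longrightarrow> k \<le> m \<Longrightarrow> restr X m [j,k] y = A j k"
    and "\<And>j k. j \<le> k \<Longrightarrow> k < m \<Longrightarrow> restr X m [j,k,Suc k] y = h j k"
    and "\<And>j k. j < k \<Longrightarrow> k \<le> m \<Longrightarrow> restr X m [j,Suc j,k] y = v j k"
proof -
  obtain y where y: "y \<in> lev X m"
    and y_grid: "grid m y = (\<lambda>j k. if j \<le> k \<and> k \<le> m then A j k else undefined,
                             \<lambda>j k. if j \<le> k \<and> k < m then h j k else undefined,
                             \<lambda>j k. if j < k \<and> k \<le> m then v j k else undefined)"
    using Ssq_lev_restrict[OF g m] surj_m by fastforce
  show thesis
  proof (rule that[OF y])
    show "restr X m [j,k] y = A j k" if "j \<le> k" "k \<le> m" for j k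
      using grid_eqD(1)[OF y_grid that] that by simp
    show "restr X m [j,k,Suc k] y = h j k" if "j \<le> k" "k < m" for j k
      using grid_eqD(2)[OF y_grid that] that by simp
    show "restr X m [j,Suc j,k] y = v j k" if "j < k" "k \<le> m" for j k
      using grid_eqD(3)[OF y_grid that] that by simp
  qed
qed

lemma grid_surj_Suc:
  assumes m: "1 \<le> m" and g: "(A, h, v) \<in> Ssq_lev squares_dbl base_edge (Suc m)"
    and surj_m: "Ssq_lev squares_dbl base_edge m \<subseteq> grid m ` lev X m"
  shows "(A, h, v) \<in> grid (Suc m) ` lev X (Suc m)"
proof -
  obtain y where y: "y \<in> lev X m"
    and y_obj: "\<And>j k. j \<le> k \<Longrightarrow> k \<le> m \<Longrightarrow> restr X m [j,k] y = A j k"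
    and y_hor: "\<And>j k. j \<le> k \<Longrightarrow> k < m \<Longrightarrow> restr X m [j,k,Suc k] y = h j k"
    and y_ver: "\<And>j k. j < k \<Longrightarrow> k \<le> m \<Longrightarrow> restr X m [j,Suc j,k] y = v j k"
    using grid_restrict_realized[OF g _ surj_m] by auto
  have h0: "h 0 m \<in> lev X 2" "restr X 2 [0,1] (h 0 m) = A 0 m" "restr X 2 [0,2] (h 0 m) = A 0 (Suc m)"
    using Ssq_lev_hor[OF g, of 0 m] by (auto simp: hom_hor_cat)
  obtain x where x: "x \<in> lev X (Suc m)" "restr X (Suc m) [0..<Suc m] x = y"
    "restr X (Suc m) [0,m,Suc m] x = h 0 m"
    using ex1_glue_prefix_last[OF m y h0(1)] y_obj[of 0 m] h0(2) by auto
  have x_prefix: "restr X (Suc m) l x = restr X m l y" if "simp_list l m" for l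
    using restr_prefix[OF x(1) that] x(2) by simp
  have x_last_hor: "restr X (Suc m) [j,m,Suc m] x = h j m" if "j \<le> m" for j
    using restr_last_column_hor[OF g x(1) x(3)] x_prefix y_ver that by simp
  have x_last_ver: "restr X (Suc m) [j,Suc j,Suc m] x = v j (Suc m)" if "j < m" for j
    using restr_last_column_ver[OF g x(1) x(3)] x_prefix y_ver that by simp
  have "grid (Suc m) x = (A, h, v)"
  proof (rule grid_eqI[OF g x(1)])
    fix j k
    assume jk: "j < k" "k \<le> Suc m"
    show "restr X (Suc m) [j,k] x = A j k"
    proof (cases "k = Suc m")
      case True
      have "restr X (Suc m) [j,Suc m] x = restr X 2 [0,2] (restr X (Suc m) [j,m,Suc m] x)"
        using x(1) jk by simp
      then show ?thesis
        using True jk x_last_hor[of j] Ssq_lev_hor[OF g, of j m] by (simp add: hom_hor_cat)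
    qed (use jk x_prefix y_obj in simp)
  next
    fix j k
    assume "j < k" "k < Suc m"
    then show "restr X (Suc m) [j,k,Suc k] x = h j k"
      using x_prefix y_hor x_last_hor by (cases "k = m") simp_all
  next
    fix j k
    assume "Suc j < k" "k \<le> Suc m"
    then show "restr X (Suc m) [j,Suc j,k] x = v j k"
      using x_prefix y_ver x_last_ver by (cases "k = Suc m") simp_all
  qed
  then show ?thesis
    using x(1) by (metis image_eqI)
qed

lemma grid_vertex:
  assumes g: "(A, h, v) \<in> Ssq_lev squares_dbl base_edge 0"
  shows "grid 0 vertex = (A, h, v)"
  by (rule grid_eqI[OF g]) (simp_all add: lev0_eq)

lemma grid_edge:
  assumes g: "(A, h, v) \<in> Ssq_lev squares_dbl base_edge 1"
  shows "A 0 1 \<in> lev X 1" and "grid 1 (A 0 1) = (A, h, v)"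
proof -
  show a: "A 0 1 \<in> lev X 1"
    using g by (rule Ssq_lev_obj) simp_all
  show "grid 1 (A 0 1) = (A, h, v)"
  proof (rule grid_eqI[OF g a])
    fix j k :: nat
    assume "j < k" "k \<le> 1"
    then have "j = 0" "k = 1"
      by auto
    then show "restr X 1 [j,k] (A 0 1) = A j k"
      using a by simp
  qed auto
qed

lemma grid_surj: "Ssq_lev squares_dbl base_edge n \<subseteq> grid n ` lev X n"
proof (induction n rule: less_induct)
  case (less n)
  show ?case
  proof
    fix g
    assume g: "g \<in> Ssq_lev squares_dbl base_edge n"
    obtain A h v where Ahv: "g = (A, h, v)"
      by (cases g) auto
    consider "n = 0" | "n = 1" | "2 \<le> n"
      by linarith
    then show "g \<in> grid n ` lev X n"
    proof cases
      case 1
      then have "grid 0 vertex = g"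
        using g Ahv grid_vertex by simp
      then show ?thesis
        using 1 lev0_eq by auto
    next
      case 2
      then have g1: "(A, h, v) \<in> Ssq_lev squares_dbl base_edge 1"
        using g Ahv by simp
      then have "grid 1 (A 0 1) = g"
        using Ahv grid_edge(2) by simp
      then show ?thesis
        using 2 grid_edge(1)[OF g1] rev_image_eqI[of "A 0 1" "lev X 1" g "grid 1"] by simp
    next
      case 3
      then have "n = Suc (n - 1)" "1 \<le> n - 1"
        by simp_all
      then show ?thesis
        using grid_surj_Suc[of "n - 1" A h v] less.IH[of "n - 1"] g Ahv by simp
    qed
  qed
qed

lemma sset_iso_grid: "sset_iso X (Ssq squares_dbl base_edge) grid"
  unfolding sset_iso_def Ssq_def sset.simps bij_betw_def
  using inj_on_grid grid_in_Ssq_lev grid_surj grid_smap by blast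

end

theorem corollary3p7:
  fixes X :: "'x sset"
  assumes "is_sset X" and "two_segal X" and "reduced X"
  shows "\<exists>(D :: ('x, 'x, 'x) dbl) (Z :: 'x) f.
           squares_category D Z \<and> sset_iso X (Ssq D Z) f"
proof -
  interpret reduced_two_segal X
    using assms by unfold_locales
  show ?thesis
    using squares_category_squares_dbl sset_iso_grid by blast
qed

end
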